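(* For every LTL formula $\varphi$ in positive normal form, the cardinality of the set of partial derivative descendants $\Delta_{\Sigma^*}(\varphi)$ is bounded by $O(2^n)$, where $n$ is the size of $\varphi$.
   Context: Fix a finite set $AP$, a finite alphabet $\Sigma$ and $I:\Sigma\to\mathcal P(AP)$. LTL formulae in positive normal form: $\varphi,\psi ::= p \mid \neg p \mid \mathbf{tt} \mid \mathbf{ff} \mid \varphi\wedge\psi \mid \varphi\vee\psi \mid \mathbf{X}\varphi \mid \varphi\,\mathbf{U}\,\psi \mid \varphi\,\mathbf{R}\,\psi$; $\mathbf F\varphi=\mathbf{tt}\,\mathbf U\varphi$, $\mathbf G\varphi=\mathbf{ff}\,\mathbf R\varphi$. The size of a formula is the number of literals, temporal operators and Boolean operators in it. A temporal formula is one whose outermost operator is not $\wedge$ or $\vee$; conjunctions of temporal formulae are normalised modulo associativity, commutativity and idempotence w.r.t. a fixed total order ($\mathbf{tt}$ the empty conjunction). $\mathrm{SIMP}(\varphi\wedge\psi)=\{\varphi'\wedge\psi'\mid\varphi'\in\mathrm{SIMP}(\varphi),\psi'\in\mathrm{SIMP}(\psi)\}$, $\mathrm{SIMP}(\varphi\vee\psi)=\mathrm{SIMP}(\varphi)\cup\mathrm{SIMP}(\psi)$, $\mathrm{SIMP}(\varphi)=\{\varphi\}$ for temporal $\varphi$. For a literal $\ell$ ($p$ or $\neg p$): $x\models p$ iff $p\in I(x)$, $x\models\neg p$ iff $p\notin I(x)$. Direct partial derivative: $\Delta_x(\mathbf{tt})=\{\mathbf{tt}\}$; $\Delta_x(\mathbf{ff})=\emptyset$;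 $\Delta_x(\ell)=\{\mathbf{tt}\}$ if $x\models\ell$, else $\emptyset$; $\Delta_x(\varphi\vee\psi)=\Delta_x(\varphi)\cup\Delta_x(\psi)$; $\Delta_x(\varphi\wedge\psi)=\{\varphi'\wedge\psi'\mid\varphi'\in\Delta_x(\varphi),\psi'\in\Delta_x(\psi)\}$; $\Delta_x(\mathbf X\varphi)=\mathrm{SIMP}(\varphi)$; $\Delta_x(\varphi\mathbf U\psi)=\Delta_x(\psi)\cup\{\varphi'\wedge(\varphi\mathbf U\psi)\mid\varphi'\in\Delta_x(\varphi)\}$; $\Delta_x(\varphi\mathbf R\psi)=\{\varphi'\wedge\psi'\mid\varphi'\in\Delta_x(\varphi),\psi'\in\Delta_x(\psi)\}\cup\{\psi'\wedge(\varphi\mathbf R\psi)\mid\psi'\in\Delta_x(\psi)\}$; $\Delta_x(\mathbf F\varphi)=\Delta_x(\varphi)\cup\{\mathbf F\varphi\}$; $\Delta_x(\mathbf G\varphi)=\{\varphi'\wedge\mathbf G\varphi\mid\varphi'\in\Delta_x(\varphi)\}$. For words: $\Delta_\varepsilon(\varphi)=\{\varphi\}$, $\Delta_{xw}(\varphi)=\bigcup_{\varphi'\in\Delta_x(\varphi)}\Delta_w(\varphi')$, and $\Delta_{\Sigma^*}(\varphi)=\bigcup_{w\in\Sigma^*}\Delta_w(\varphi)$. *)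

theory Defs
  imports Main
begin

datatype 'a ltl =
    Prop 'a | NProp 'a | TT | FF
  | And "'a ltl" "'a ltl" | Or "'a ltl" "'a ltl"
  | Next "'a ltl" | Until "'a ltl" "'a ltl" | Release "'a ltl" "'a ltl"

abbreviation Ev :: "'a ltl \<Rightarrow> 'a ltl" where "Ev \<phi> \<equiv> Until TT \<phi>"
abbreviation Alw :: "'a ltl \<Rightarrow> 'a ltl" where "Alw \<phi> \<equiv> Release FF \<phi>"

fun fsize :: "'a ltl \<Rightarrow> nat" where
  "fsize (Prop p) = 1"
| "fsize (NProp p) = 1"
| "fsize TT = 0"
| "fsize FF = 0"
| "fsize (And a b) = 1 + fsize a + fsize b"
| "fsize (Or a b) = 1 + fsize a + fsize b"
| "fsize (Next a) = 1 + fsize a"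
| "fsize (Until a b) = 1 + fsize a + fsize b"
| "fsize (Release a b) = 1 + fsize a + fsize b"

fun temporal :: "'a ltl \<Rightarrow> bool" where
  "temporal (And a b) = False"
| "temporal (Or a b) = False"
| "temporal _ = True"

fun conjuncts :: "'a ltl \<Rightarrow> 'a ltl set" where
  "conjuncts (And a b) = conjuncts a \<union> conjuncts b"
| "conjuncts TT = {}"
| "conjuncts \<phi> = {\<phi>}"

fun conj_list :: "'a ltl list \<Rightarrow> 'a ltl" where
  "conj_list [] = TT"
| "conj_list [a] = a"
| "conj_list (a # xs) = And a (conj_list xs)"

text \<open>Canonical (normalised modulo ACI) conjunction of a finite set of temporal
  formulae: a fixed choice of an enumeration of the set.\<close>
definition conj_set :: "'a ltl set \<Rightarrow> 'a ltl" where
  "conj_set S = conj_list (SOME xs. set xs = S \<and> distinct xs)"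

definition mk_and :: "'a ltl \<Rightarrow> 'a ltl \<Rightarrow> 'a ltl" where
  "mk_and a b = conj_set (conjuncts a \<union> conjuncts b)"

fun SIMP :: "'a ltl \<Rightarrow> 'a ltl set" where
  "SIMP (And a b) = {mk_and a' b' | a' b'. a' \<in> SIMP a \<and> b' \<in> SIMP b}"
| "SIMP (Or a b) = SIMP a \<union> SIMP b"
| "SIMP \<phi> = {\<phi>}"

fun pd :: "('s \<Rightarrow> 'a set) \<Rightarrow> 's \<Rightarrow> 'a ltl \<Rightarrow> 'a ltl set" where
  "pd I x TT = {TT}"
| "pd I x FF = {}"
| "pd I x (Prop p) = (if p \<in> I x then {TT} else {})"
| "pd I x (NProp p) = (if p \<notin> I x then {TT} else {})"
| "pd I x (Or a b) = pd I x a \<union> pd I x b"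
| "pd I x (And a b) = {mk_and a' b' | a' b'. a' \<in> pd I x a \<and> b' \<in> pd I x b}"
| "pd I x (Next a) = SIMP a"
| "pd I x (Until a b) =
     pd I x b \<union> {mk_and a' (Until a b) | a'. a' \<in> pd I x a}"
| "pd I x (Release a b) =
     {mk_and a' b' | a' b'. a' \<in> pd I x a \<and> b' \<in> pd I x b}
     \<union> {mk_and b' (Release a b) | b'. b' \<in> pd I x b}"

fun pd_word :: "('s \<Rightarrow> 'a set) \<Rightarrow> 's list \<Rightarrow> 'a ltl \<Rightarrow> 'a ltl set" where
  "pd_word I [] \<phi> = {\<phi>}"
| "pd_word I (x # w) \<phi> = (\<Union>\<phi>' \<in> pd I x \<phi>. pd_word I w \<phi>')"

definition descendants :: "('s \<Rightarrow> 'a set) \<Rightarrow> 'a ltl \<Rightarrow> 'a ltl set" where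
  "descendants I \<phi> = (\<Union>w \<in> lists UNIV. pd_word I w \<phi>)"

end

theory Submission
  imports Defs
begin

text \<open>Every derivative of \<open>\<phi>\<close> by a nonempty word is the normalised conjunction of a set
  of temporal subformulae of \<open>\<phi>\<close> other than tt. There are at most \<open>fsize \<phi> + 1\<close> such
  subformulae (ff has size 0 but may occur), so apart from \<open>\<phi>\<close> itself there are at most
  \<open>2 ^ (fsize \<phi> + 1)\<close> descendants, which gives the bound with constant 3.\<close>

fun temporal_subformulas :: "'a ltl \<Rightarrow> 'a ltl set" where
  "temporal_subformulas TT = {}"
| "temporal_subformulas (And a b) = temporal_subformulas a \<union> temporal_subformulas b"
| "temporal_subformulas (Or a b) = temporal_subformulas a \<union> temporal_subformulas b"
| "temporal_subformulas (Next a) = insert (Next a) (temporal_subformulas a)"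
| "temporal_subformulas (Until a b) =
     insert (Until a b) (temporal_subformulas a \<union> temporal_subformulas b)"
| "temporal_subformulas (Release a b) =
     insert (Release a b) (temporal_subformulas a \<union> temporal_subformulas b)"
| "temporal_subformulas \<phi> = {\<phi>}"

lemma finite_temporal_subformulas: "finite (temporal_subformulas \<phi>)"
  by (induction \<phi>) auto

lemma temporal_subformulas_temporal: "\<psi> \<in> temporal_subformulas \<phi> \<Longrightarrow> temporal \<psi>"
  by (induction \<phi>) auto

lemma TT_notin_temporal_subformulas: "TT \<notin> temporal_subformulas \<phi>"
  by (induction \<phi>) auto

lemma temporal_subformulas_trans:
  "\<psi> \<in> temporal_subformulas \<phi> \<Longrightarrow> temporal_subformulas \<psi> \<subseteq> temporal_subformulas \<phi>"
  by (induction \<phi>) auto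

lemma card_insert_Un_le:
  assumes "finite A" "finite B"
  shows "card (insert x (A \<union> B)) \<le> Suc (card A + card B)"
  using assms card_Un_le[of A B] by (simp add: card_insert_if)

lemma card_temporal_subformulas_without_FF:
  "card (temporal_subformulas \<phi> - {FF}) \<le> fsize \<phi>"
proof (induction \<phi>)
  case (And a b)
  then show ?case
    using card_Un_le[of "temporal_subformulas a - {FF}" "temporal_subformulas b - {FF}"]
    by (simp add: Un_Diff)
next
  case (Or a b)
  then show ?case
    using card_Un_le[of "temporal_subformulas a - {FF}" "temporal_subformulas b - {FF}"]
    by (simp add: Un_Diff)
next
  case (Next a)
  then show ?case
    by (simp add: insert_Diff_if card_insert_if finite_temporal_subformulas)
next
  case (Until a b)
  then show ?case
    using card_insert_Un_le[of "temporal_subformulas a - {FF}" "temporal_subformulas b - {FF}" "Until a b"]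
    by (simp add: Un_Diff insert_Diff_if finite_temporal_subformulas)
next
  case (Release a b)
  then show ?case
    using card_insert_Un_le[of "temporal_subformulas a - {FF}" "temporal_subformulas b - {FF}" "Release a b"]
    by (simp add: Un_Diff insert_Diff_if finite_temporal_subformulas)
qed auto

lemma card_temporal_subformulas: "card (temporal_subformulas \<phi>) \<le> fsize \<phi> + 1"
proof -
  have "card (temporal_subformulas \<phi>) \<le> card (temporal_subformulas \<phi> - {FF}) + 1"
    by (cases "FF \<in> temporal_subformulas \<phi>")
      (auto simp: card_Diff_singleton card_gt_0_iff finite_temporal_subformulas)
  then show ?thesis
    using card_temporal_subformulas_without_FF[of \<phi>] by simp
qed

lemma conjuncts_conj_list: "conjuncts (conj_list xs) = \<Union> (conjuncts ` set xs)"
  by (induction xs rule: conj_list.induct) auto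

lemma conjuncts_temporal: "temporal \<phi> \<Longrightarrow> \<phi> \<noteq> TT \<Longrightarrow> conjuncts \<phi> = {\<phi>}"
  by (cases \<phi>) auto

lemma conj_set_enumeration:
  assumes "finite S"
  obtains xs where "set xs = S" "distinct xs" "conj_set S = conj_list xs"
proof -
  have "\<exists>xs. set xs = S \<and> distinct xs"
    using finite_distinct_list[OF assms] by blast
  from someI_ex[OF this] that show thesis
    unfolding conj_set_def by blast
qed

lemma conj_set_empty: "conj_set {} = TT"
  by (rule conj_set_enumeration[of "{} :: 'a ltl set"]) simp_all

lemma conj_set_singleton: "conj_set {\<phi>} = \<phi>"
proof (rule conj_set_enumeration[of "{\<phi>}"])
  fix xs :: "'a ltl list"
  assume xs: "set xs = {\<phi>}" "distinct xs" and "conj_set {\<phi>} = conj_list xs"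
  from xs have "length xs = 1"
    using distinct_card[of xs] by simp
  then obtain \<psi> where "xs = [\<psi>]"
    by (metis One_nat_def length_0_conv length_Suc_conv)
  with xs have "xs = [\<phi>]" by simp
  with \<open>conj_set {\<phi>} = conj_list xs\<close> show "conj_set {\<phi>} = \<phi>" by simp
qed simp

definition conjunctions :: "'a ltl set \<Rightarrow> 'a ltl set" where
  "conjunctions Y = conj_set ` Pow Y"

lemma card_conjunctions: "finite Y \<Longrightarrow> card (conjunctions Y) \<le> 2 ^ card Y"
  unfolding conjunctions_def
  using card_image_le[of "Pow Y" conj_set] by (simp add: card_Pow)

lemma TT_in_conjunctions: "TT \<in> conjunctions Y"
proof -
  have "conj_set {} \<in> conj_set ` Pow Y" by blast
  then show ?thesis unfolding conjunctions_def conj_set_empty .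
qed

lemma basis_in_conjunctions: "\<phi> \<in> Y \<Longrightarrow> \<phi> \<in> conjunctions Y"
proof -
  assume "\<phi> \<in> Y"
  then have "conj_set {\<phi>} \<in> conj_set ` Pow Y" by blast
  then show ?thesis unfolding conjunctions_def conj_set_singleton .
qed

locale conjunction_basis =
  fixes Y :: "'a ltl set"
  assumes finite_basis: "finite Y"
    and basis_temporal: "\<psi> \<in> Y \<Longrightarrow> temporal \<psi>"
    and TT_notin_basis: "TT \<notin> Y"
begin

lemma conjuncts_conj_set:
  assumes "S \<subseteq> Y"
  shows "conjuncts (conj_set S) = S"
proof (rule conj_set_enumeration[of S])
  show "finite S"
    using assms finite_basis by (rule finite_subset)
  fix xs assume "set xs = S" "conj_set S = conj_list xs"
  moreover have "conjuncts \<psi> = {\<psi>}" if "\<psi> \<in> S" for \<psi>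
    using that assms basis_temporal TT_notin_basis conjuncts_temporal by blast
  ultimately show "conjuncts (conj_set S) = S"
    by (simp add: conjuncts_conj_list)
qed

lemma mk_and_in_conjunctions:
  assumes "a \<in> conjunctions Y" "b \<in> conjunctions Y"
  shows "mk_and a b \<in> conjunctions Y"
proof -
  obtain A B where "A \<subseteq> Y" "B \<subseteq> Y" "a = conj_set A" "b = conj_set B"
    using assms unfolding conjunctions_def by auto
  then have "mk_and a b = conj_set (A \<union> B)"
    by (simp add: mk_and_def conjuncts_conj_set)
  with \<open>A \<subseteq> Y\<close> \<open>B \<subseteq> Y\<close> show ?thesis
    unfolding conjunctions_def by blast
qed

lemma mk_and_image_in_conjunctions:
  "A \<subseteq> conjunctions Y \<Longrightarrow> B \<subseteq> conjunctions Y \<Longrightarrow>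
    {mk_and a b | a b. a \<in> A \<and> b \<in> B} \<subseteq> conjunctions Y"
  using mk_and_in_conjunctions by blast

lemma SIMP_in_conjunctions:
  "temporal_subformulas \<phi> \<subseteq> Y \<Longrightarrow> SIMP \<phi> \<subseteq> conjunctions Y"
  by (induction \<phi>)
    (simp_all add: TT_in_conjunctions basis_in_conjunctions mk_and_image_in_conjunctions)

lemma pd_in_conjunctions:
  "temporal_subformulas \<phi> \<subseteq> Y \<Longrightarrow> pd I x \<phi> \<subseteq> conjunctions Y"
proof (induction \<phi>)
  case (Until a b)
  then have "Until a b \<in> conjunctions Y"
    by (simp add: basis_in_conjunctions)
  with Until show ?case
    by (auto intro: mk_and_in_conjunctions)
next
  case (Release a b)
  then have "Release a b \<in> conjunctions Y"
    by (simp add: basis_in_conjunctions)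
  with Release show ?case
    by (auto intro: mk_and_in_conjunctions)
qed (simp_all add: TT_in_conjunctions mk_and_image_in_conjunctions SIMP_in_conjunctions)

context
  assumes basis_closed: "\<psi> \<in> Y \<Longrightarrow> temporal_subformulas \<psi> \<subseteq> Y"
begin

lemma pd_conj_list_in_conjunctions:
  "set xs \<subseteq> Y \<Longrightarrow> pd I x (conj_list xs) \<subseteq> conjunctions Y"
proof (induction xs rule: conj_list.induct)
  case 1
  then show ?case by (simp add: TT_in_conjunctions)
next
  case (2 a)
  then show ?case by (simp add: basis_closed pd_in_conjunctions)
next
  case (3 a v va)
  then have "pd I x a \<subseteq> conjunctions Y"
    by (simp add: basis_closed pd_in_conjunctions)
  with 3 show ?case
    by (simp add: mk_and_image_in_conjunctions)
qed

lemma pd_word_in_conjunctions: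
  "\<psi> \<in> conjunctions Y \<Longrightarrow> pd_word I w \<psi> \<subseteq> conjunctions Y"
proof (induction w arbitrary: \<psi>)
  case (Cons x w)
  then obtain S where "S \<subseteq> Y" "\<psi> = conj_set S"
    unfolding conjunctions_def by auto
  moreover obtain xs where "set xs = S" "conj_set S = conj_list xs"
    using conj_set_enumeration finite_subset[OF \<open>S \<subseteq> Y\<close> finite_basis] by metis
  ultimately have "pd I x \<psi> \<subseteq> conjunctions Y"
    using pd_conj_list_in_conjunctions by metis
  with Cons.IH show ?case by auto
qed simp

end

end

lemma conjunction_basis_temporal_subformulas:
  "conjunction_basis (temporal_subformulas \<phi>)"
  by unfold_locales
    (simp_all add: finite_temporal_subformulas temporal_subformulas_temporal
      TT_notin_temporal_subformulas)

lemma descendants_subset: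
  "descendants I \<phi> \<subseteq> insert \<phi> (conjunctions (temporal_subformulas \<phi>))"
proof
  interpret conjunction_basis "temporal_subformulas \<phi>"
    by (rule conjunction_basis_temporal_subformulas)
  fix \<psi> assume "\<psi> \<in> descendants I \<phi>"
  then obtain w where \<psi>: "\<psi> \<in> pd_word I w \<phi>"
    unfolding descendants_def by auto
  show "\<psi> \<in> insert \<phi> (conjunctions (temporal_subformulas \<phi>))"
  proof (cases w)
    case Nil
    with \<psi> show ?thesis by simp
  next
    case (Cons x v)
    with \<psi> obtain \<chi> where "\<chi> \<in> pd I x \<phi>" "\<psi> \<in> pd_word I v \<chi>"
      by auto
    then have "\<chi> \<in> conjunctions (temporal_subformulas \<phi>)"
      using pd_in_conjunctions[OF order_refl, of I x] by blast
    with temporal_subformulas_trans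
    have "pd_word I v \<chi> \<subseteq> conjunctions (temporal_subformulas \<phi>)"
      by (rule pd_word_in_conjunctions)
    with \<open>\<psi> \<in> pd_word I v \<chi>\<close> show ?thesis by blast
  qed
qed

theorem lemma10:
  fixes I :: "'s::finite \<Rightarrow> 'a::finite set"
  shows "\<exists>c::nat. \<forall>\<phi> :: 'a ltl.
           finite (descendants I \<phi>) \<and> card (descendants I \<phi>) \<le> c * 2 ^ fsize \<phi>"
proof (intro exI allI)
  fix \<phi> :: "'a ltl"
  let ?D = "insert \<phi> (conjunctions (temporal_subformulas \<phi>))"
  have finite_D: "finite ?D"
    by (simp add: conjunctions_def finite_temporal_subformulas)
  have "card (descendants I \<phi>) \<le> card ?D"
    by (rule card_mono[OF finite_D descendants_subset])
  also have "\<dots> \<le> 1 + 2 ^ card (temporal_subformulas \<phi>)"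
    using card_conjunctions[OF finite_temporal_subformulas, of \<phi>] finite_D
    by (simp add: card_insert_if)
  also have "\<dots> \<le> 1 + 2 ^ (fsize \<phi> + 1)"
    using power_increasing[OF card_temporal_subformulas[of \<phi>], of "2::nat"] by simp
  also have "\<dots> \<le> 3 * 2 ^ fsize \<phi>"
    by simp
  finally show "finite (descendants I \<phi>) \<and> card (descendants I \<phi>) \<le> 3 * 2 ^ fsize \<phi>"
    using finite_subset[OF descendants_subset finite_D] by simp
qed

end
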